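(* Let $\operatorname{dist}$ be a distance function and let $(X,k,D)$ be a yes-instance of \textsc{$k$-Clustering} with distance $\operatorname{dist}$. Then there exists a solution of $(X,k,D)$ whose clustering is regular.
   Context: \textsc{$k$-Clustering} with distance $\operatorname{dist}$ (a function assigning a nonnegative real to each pair of a vector in $\mathbb{Z}^d$ and a vector in $\mathbb{R}^d$): given a multiset $X$ of $n$ vectors in $\mathbb{Z}^d$, a positive integer $k$ and a nonnegative number $D$, decide whether there is a partition of $X$ into $k$ clusters $C_1,\dots,C_k$ and vectors $c_1,\dots,c_k\in\mathbb{R}^d$ with $\sum_{i=1}^k\sum_{x\in C_i}\operatorname{dist}(x,c_i)\le D$; such clusters and centroids form a solution. An initial cluster of a multiset $X$ is an inclusion-wise maximal sub-multiset $I\subseteq X$ all of whose vectors are equal. A clustering $\{C_1,\dots,C_k\}$ of $X$ is regular if for every initial cluster $I$ there is $i\in\{1,\dots,k\}$ with $I\subseteq C_i$. *)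

theory Defs
  imports "HOL-Analysis.Analysis" "HOL-Library.Multiset"
begin

text \<open>Vectors in Z^d are int ^ 'd, centroids are real ^ 'd (the dimension d is the
  finite index type 'd). A clustering of X into k clusters is a family C 0, ..., C (k-1)
  of sub-multisets whose multiset sum is X (clusters may be empty).\<close>

definition is_clustering :: "'a multiset \<Rightarrow> nat \<Rightarrow> (nat \<Rightarrow> 'a multiset) \<Rightarrow> bool" where
  "is_clustering X k C \<longleftrightarrow> (\<Sum>i<k. C i) = X"

definition clustering_cost ::
  "(int ^ 'd \<Rightarrow> real ^ 'd \<Rightarrow> real) \<Rightarrow> nat \<Rightarrow> (nat \<Rightarrow> (int ^ 'd) multiset) \<Rightarrow> (nat \<Rightarrow> real ^ 'd) \<Rightarrow> real" where
  "clustering_cost dst k C c = (\<Sum>i<k. \<Sum>\<^sub># (image_mset (\<lambda>x. dst x (c i)) (C i)))"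

definition is_solution ::
  "(int ^ 'd \<Rightarrow> real ^ 'd \<Rightarrow> real) \<Rightarrow> (int ^ 'd) multiset \<Rightarrow> nat \<Rightarrow> real
     \<Rightarrow> (nat \<Rightarrow> (int ^ 'd) multiset) \<Rightarrow> (nat \<Rightarrow> real ^ 'd) \<Rightarrow> bool" where
  "is_solution dst X k D C c \<longleftrightarrow> is_clustering X k C \<and> clustering_cost dst k C c \<le> D"

definition yes_instance ::
  "(int ^ 'd \<Rightarrow> real ^ 'd \<Rightarrow> real) \<Rightarrow> (int ^ 'd) multiset \<Rightarrow> nat \<Rightarrow> real \<Rightarrow> bool" where
  "yes_instance dst X k D \<longleftrightarrow> (\<exists>C c. is_solution dst X k D C c)"

definition all_equal :: "'a multiset \<Rightarrow> bool" where
  "all_equal I \<longleftrightarrow> (\<forall>x y. x \<in># I \<longrightarrow> y \<in># I \<longrightarrow> x = y)"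

definition initial_cluster :: "'a multiset \<Rightarrow> 'a multiset \<Rightarrow> bool" where
  "initial_cluster X I \<longleftrightarrow> I \<subseteq># X \<and> all_equal I \<and>
     (\<forall>J. J \<subseteq># X \<and> all_equal J \<and> I \<subseteq># J \<longrightarrow> J = I)"

definition regular_clustering :: "'a multiset \<Rightarrow> nat \<Rightarrow> (nat \<Rightarrow> 'a multiset) \<Rightarrow> bool" where
  "regular_clustering X k C \<longleftrightarrow> (\<forall>I. initial_cluster X I \<longrightarrow> (\<exists>i<k. I \<subseteq># C i))"

end

theory Submission
  imports Defs
begin

text \<open>Keep the centroids of a given solution and move every point to a centroid nearest to it.
  No point's distance to its centroid increases, so the cost stays at most D; and since the
  new cluster of a point depends only on the point itself, equal points end up in the same
  cluster, i.e. the new clustering is regular.\<close>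

definition clustering_by :: "'a multiset \<Rightarrow> ('a \<Rightarrow> nat) \<Rightarrow> nat \<Rightarrow> 'a multiset" where
  "clustering_by X j i = filter_mset (\<lambda>x. j x = i) X"

definition nearest_centre :: "('a \<Rightarrow> 'c \<Rightarrow> real) \<Rightarrow> nat \<Rightarrow> (nat \<Rightarrow> 'c) \<Rightarrow> 'a \<Rightarrow> nat" where
  "nearest_centre dst k c x = arg_min_on (\<lambda>i. dst x (c i)) {..<k}"

lemma sum_mset_image_sum:
  "finite I \<Longrightarrow> (\<Sum>x\<in>#(\<Sum>i\<in>I. C i). g x) = (\<Sum>i\<in>I. \<Sum>x\<in>#C i. g x)"
  by (induction I rule: finite_induct) auto

lemma is_clustering_clustering_by:
  assumes "\<And>x. x \<in># X \<Longrightarrow> j x < k"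
  shows "is_clustering X k (clustering_by X j)"
  unfolding is_clustering_def
proof (rule multiset_eqI)
  fix x
  have "count (\<Sum>i<k. clustering_by X j i) x = (\<Sum>i<k. if j x = i then count X x else 0)"
    by (simp add: count_sum clustering_by_def)
  also have "\<dots> = count X x"
    using assms[of x] by (cases "x \<in># X") (auto simp: not_in_iff)
  finally show "count (\<Sum>i<k. clustering_by X j i) x = count X x" .
qed

lemma regular_clustering_by:
  assumes "\<And>x. j x < k"
  shows "regular_clustering X k (clustering_by X j)"
  unfolding regular_clustering_def
proof (intro allI impI)
  fix I assume I: "initial_cluster X I"
  show "\<exists>i<k. I \<subseteq># clustering_by X j i"
  proof (cases "I = {#}")
    case True
    then show ?thesis using assms[of undefined] by auto
  next
    case False
    then obtain v where "v \<in># I" by auto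
    with I have "I \<subseteq># X" and "\<And>y. y \<in># I \<Longrightarrow> y = v"
      unfolding initial_cluster_def all_equal_def by auto
    then have "filter_mset (\<lambda>x. j x = j v) I = I"
      by (auto simp: filter_mset_eq_conv)
    moreover have "filter_mset (\<lambda>x. j x = j v) I \<subseteq># clustering_by X j (j v)"
      unfolding clustering_by_def using \<open>I \<subseteq># X\<close> by (rule multiset_filter_mono)
    ultimately show ?thesis using assms[of v] by auto
  qed
qed

lemma nearest_centre_less: "k > 0 \<Longrightarrow> nearest_centre dst k c x < k"
  unfolding nearest_centre_def using arg_min_if_finite(1)[of "{..<k}"] by auto

lemma nearest_centre_le:
  "i < k \<Longrightarrow> dst x (c (nearest_centre dst k c x)) \<le> dst x (c i)"
  unfolding nearest_centre_def using arg_min_least[of "{..<k}" i "\<lambda>i. dst x (c i)"] by auto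

lemma clustering_cost_nearest_centre_le:
  assumes "is_clustering X k C" and "k > 0"
  shows "clustering_cost dst k (clustering_by X (nearest_centre dst k c)) c \<le> clustering_cost dst k C c"
proof -
  define j where "j = nearest_centre dst k c"
  define m where "m x = dst x (c (j x))" for x
  have "is_clustering X k (clustering_by X j)"
    by (rule is_clustering_clustering_by) (simp add: j_def nearest_centre_less assms(2))
  have "clustering_cost dst k (clustering_by X j) c = (\<Sum>i<k. \<Sum>x\<in>#clustering_by X j i. m x)"
    unfolding clustering_cost_def
    by (intro sum.cong refl arg_cong[where f=sum_mset] image_mset_cong)
       (auto simp: clustering_by_def m_def)
  also have "\<dots> = (\<Sum>x\<in>#(\<Sum>i<k. clustering_by X j i). m x)"
    by (simp add: sum_mset_image_sum)
  also have "\<dots> = (\<Sum>x\<in>#(\<Sum>i<k. C i). m x)"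
    using \<open>is_clustering X k (clustering_by X j)\<close> assms(1) by (simp add: is_clustering_def)
  also have "\<dots> = (\<Sum>i<k. \<Sum>x\<in>#C i. m x)"
    by (simp add: sum_mset_image_sum)
  also have "\<dots> \<le> clustering_cost dst k C c"
    unfolding clustering_cost_def
    by (intro sum_mono sum_mset_mono) (auto simp: m_def j_def nearest_centre_le)
  finally show ?thesis by (simp only: j_def)
qed

theorem proposition1:
  fixes dst :: "int ^ 'd \<Rightarrow> real ^ 'd \<Rightarrow> real"
    and X :: "(int ^ 'd) multiset" and k :: nat and D :: real
  assumes "\<forall>x c. dst x c \<ge> 0"
    and "k > 0" and "D \<ge> 0"
    and "yes_instance dst X k D"
  shows "\<exists>C c. is_solution dst X k D C c \<and> regular_clustering X k C"
proof -
  obtain C c where "is_solution dst X k D C c"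
    using assms(4) unfolding yes_instance_def by blast
  then have "is_clustering X k C" and "clustering_cost dst k C c \<le> D"
    unfolding is_solution_def by auto
  define C' where "C' = clustering_by X (nearest_centre dst k c)"
  have "is_clustering X k C'"
    unfolding C'_def by (rule is_clustering_clustering_by) (rule nearest_centre_less[OF assms(2)])
  moreover have "clustering_cost dst k C' c \<le> D"
    using clustering_cost_nearest_centre_le[OF \<open>is_clustering X k C\<close> assms(2)]
      \<open>clustering_cost dst k C c \<le> D\<close>
    unfolding C'_def by (rule order_trans)
  ultimately have "is_solution dst X k D C' c"
    unfolding is_solution_def by blast
  moreover have "regular_clustering X k C'"
    unfolding C'_def by (rule regular_clustering_by) (rule nearest_centre_less[OF assms(2)])
  ultimately show ?thesis by blast
qed

end
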